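(* Let $P\in\mathcal B\setminus\mathcal B_0$, with coordinates normalized so that $P=(0,0)$. For every $0<\alpha\le1$ there exist $U',V'<0$ (close to $0$) and a constant $I_0>0$ depending on the initial data such that, in the region $D_0=\{(u,v):U'\le u\le 0,\ V'\le v\le0,\ r(u,v)>0\}\subset\mathcal T$, $$|\partial_u\phi(u,v)|\le\frac{I_0}{r(u,v)^{3+\alpha}},\qquad|\partial_v\phi(u,v)|\le\frac{I_0}{r(u,v)^{3+\alpha}}.$$
   Context: Consider the Einstein–scalar field system under spherical symmetry in double null coordinates, $g=-\Omega^2(u,v)\,du\,dv+r^2(u,v)(d\theta^2+\sin^2\theta\,d\varphi^2)$, with scalar field $\phi$; the equations are $r\partial_u\partial_v r=-\partial_ur\,\partial_vr-\frac14\Omega^2$, $r^2\partial_u\partial_v\log\Omega=\partial_ur\,\partial_vr+\frac14\Omega^2-r^2\partial_u\phi\,\partial_v\phi$, $r\partial_u\partial_v\phi=-\partial_ur\,\partial_v\phi-\partial_vr\,\partial_u\phi$, $\partial_u(\Omega^{-2}\partial_ur)=-r\Omega^{-2}(\partial_u\phi)^2$, $\partial_v(\Omega^{-2}\partial_vr)=-r\Omega^{-2}(\partial_v\phi)^2$. We consider the maximal development of Christodoulou's spherically symmetric characteristic data in which a trapped surface forms; $\mathcal T=\{\partial_vr<0,\partial_ur<0,r>0\}$ is the trapped region, $\mathcal B$ the singular future boundary (where $r=0$), $\mathcal B_0$ the first singular point on the centre, and $\mathcal B\setminus\mathcal B_0$ a spacelike $C^1$ curve. Known fact (Christodoulou):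 for $P\in\mathcal B\setminus\mathcal B_0$, $-r\partial_ur\to C_1>0$ and $-r\partial_vr\to C_2>0$ at $P$, continuously along $\mathcal B$, so that in a sufficiently small $D_0$ one has $r\partial_ur+C_1=o(1)$, $r\partial_vr+C_2=o(1)$. *)

theory Defs
  imports "HOL-Analysis.Analysis"
begin

definition du :: "(real \<times> real \<Rightarrow> real) \<Rightarrow> real \<times> real \<Rightarrow> real" where
  "du f p = deriv (\<lambda>s. f (s, snd p)) (fst p)"

definition dv :: "(real \<times> real \<Rightarrow> real) \<Rightarrow> real \<times> real \<Rightarrow> real" where
  "dv f p = deriv (\<lambda>t. f (fst p, t)) (snd p)"

definition C1_on :: "(real \<times> real) set \<Rightarrow> (real \<times> real \<Rightarrow> real) \<Rightarrow> bool" where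
  "C1_on Q f \<longleftrightarrow>
     (\<forall>p\<in>Q. (\<lambda>s. f (s, snd p)) differentiable (at (fst p))
            \<and> (\<lambda>t. f (fst p, t)) differentiable (at (snd p)))
     \<and> continuous_on Q f \<and> continuous_on Q (du f) \<and> continuous_on Q (dv f)"

definition C2_on :: "(real \<times> real) set \<Rightarrow> (real \<times> real \<Rightarrow> real) \<Rightarrow> bool" where
  "C2_on Q f \<longleftrightarrow> C1_on Q f \<and> C1_on Q (du f) \<and> C1_on Q (dv f)"

text \<open>Spherically symmetric Einstein--scalar field system in double null gauge.\<close>

definition ESF_solution ::
  "(real \<times> real) set \<Rightarrow> (real \<times> real \<Rightarrow> real) \<Rightarrow> (real \<times> real \<Rightarrow> real)
     \<Rightarrow> (real \<times> real \<Rightarrow> real) \<Rightarrow> bool" where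
  "ESF_solution Q r \<Omega> \<phi> \<longleftrightarrow>
     open Q \<and> C2_on Q r \<and> C2_on Q \<Omega> \<and> C2_on Q \<phi> \<and>
     (\<forall>p\<in>Q. r p > 0 \<and> \<Omega> p > 0) \<and>
     (\<forall>p\<in>Q.
        r p * du (dv r) p = - du r p * dv r p - (1/4) * (\<Omega> p)\<^sup>2
      \<and> (r p)\<^sup>2 * du (dv (\<lambda>q. ln (\<Omega> q))) p
          = du r p * dv r p + (1/4) * (\<Omega> p)\<^sup>2 - (r p)\<^sup>2 * du \<phi> p * dv \<phi> p
      \<and> r p * du (dv \<phi>) p = - du r p * dv \<phi> p - dv r p * du \<phi> p
      \<and> du (\<lambda>q. du r q / (\<Omega> q)\<^sup>2) p = - r p * (du \<phi> p)\<^sup>2 / (\<Omega> p)\<^sup>2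
      \<and> dv (\<lambda>q. dv r q / (\<Omega> q)\<^sup>2) p = - r p * (dv \<phi> p)\<^sup>2 / (\<Omega> p)\<^sup>2)"

definition trapped_region ::
  "(real \<times> real) set \<Rightarrow> (real \<times> real \<Rightarrow> real) \<Rightarrow> (real \<times> real) set" where
  "trapped_region Q r = {p \<in> Q. dv r p < 0 \<and> du r p < 0 \<and> r p > 0}"

end

theory Submission
  imports Defs
begin

text \<open>Along a row \<open>v = const\<close> the wave equation reads \<open>\<partial>\<^sub>u(r \<partial>\<^sub>v\<phi>) = -\<partial>\<^sub>vr \<partial>\<^sub>u\<phi>\<close>,
  and along a column \<open>\<partial>\<^sub>v(r \<partial>\<^sub>u\<phi>) = -\<partial>\<^sub>ur \<partial>\<^sub>v\<phi>\<close> once mixed partials commute.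
  Near the singular point \<open>-r \<partial>\<^sub>ur\<close> and \<open>-r \<partial>\<^sub>vr\<close> stay between \<open>2C/3\<close> and \<open>4C/3\<close>,
  so \<open>r\<close> decreases towards the corner and \<open>r\<^sup>-\<^sup>P\<close> is an explicit majorant: integrating
  along rows bounds \<open>r\<^sup>P |r \<partial>\<^sub>v\<phi>|\<close> by its value on the initial edge plus \<open>\<theta>\<^sub>1\<close> times
  the supremum of \<open>r\<^sup>P |r \<partial>\<^sub>u\<phi>|\<close>, and vice versa with \<open>\<theta>\<^sub>2\<close>.
  As \<open>\<theta>\<^sub>1\<theta>\<^sub>2 = K\<^sub>1K\<^sub>2/(P\<^sup>2c\<^sub>1c\<^sub>2) = 4/P\<^sup>2 < 1\<close> for \<open>P = 2 + \<alpha>\<close>, these coupled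
  inequalities close for the suprema over the compact level sets \<open>{r \<ge> \<delta>}\<close>, uniformly in \<open>\<delta>\<close>.\<close>

lemma C1_on_has_du:
  assumes "C1_on Q f" "(u, v) \<in> Q"
  shows "((\<lambda>s. f (s, v)) has_real_derivative du f (u, v)) (at u)"
  using assms unfolding C1_on_def du_def
  by (metis DERIV_deriv_iff_real_differentiable fst_conv snd_conv)

lemma C1_on_has_dv:
  assumes "C1_on Q f" "(u, v) \<in> Q"
  shows "((\<lambda>t. f (u, t)) has_real_derivative dv f (u, v)) (at v)"
  using assms unfolding C1_on_def dv_def
  by (metis DERIV_deriv_iff_real_differentiable fst_conv snd_conv)

lemma dist_Pair_le_sum: "dist (s, t) (u, v) \<le> \<bar>s - u\<bar> + \<bar>t - v\<bar>" for s t u v :: real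
  using norm_Pair_le[of "s - u" "t - v"] by (simp add: dist_norm)

lemma second_difference_dv_du:
  assumes f: "C1_on Q f" and fu: "C1_on Q (du f)" and h: "h > 0"
    and box: "{u..u+h} \<times> {v..v+h} \<subseteq> Q"
  obtains \<xi> \<eta> where "\<xi> \<in> {u..u+h}" "\<eta> \<in> {v..v+h}"
    "f (u+h, v+h) - f (u, v+h) - f (u+h, v) + f (u, v) = h\<^sup>2 * dv (du f) (\<xi>, \<eta>)"
proof -
  obtain \<xi> where \<xi>: "u < \<xi>" "\<xi> < u+h"
    "(f (u+h, v+h) - f (u+h, v)) - (f (u, v+h) - f (u, v)) = h * (du f (\<xi>, v+h) - du f (\<xi>, v))"
    using MVT2[of u "u+h" "\<lambda>s. f (s, v+h) - f (s, v)" "\<lambda>s. du f (s, v+h) - du f (s, v)"] h box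
    by (force intro!: DERIV_diff C1_on_has_du[OF f])
  obtain \<eta> where \<eta>: "v < \<eta>" "\<eta> < v+h"
    "du f (\<xi>, v+h) - du f (\<xi>, v) = h * dv (du f) (\<xi>, \<eta>)"
    using MVT2[of v "v+h" "\<lambda>t. du f (\<xi>, t)" "\<lambda>t. dv (du f) (\<xi>, t)"] h box \<xi>
    by (force intro!: C1_on_has_dv[OF fu])
  show ?thesis
    by (rule that[of \<xi> \<eta>]) (use \<xi> \<eta> in \<open>auto simp: power2_eq_square algebra_simps\<close>)
qed

lemma second_difference_du_dv:
  assumes f: "C1_on Q f" and fv: "C1_on Q (dv f)" and h: "h > 0"
    and box: "{u..u+h} \<times> {v..v+h} \<subseteq> Q"
  obtains \<xi> \<eta> where "\<xi> \<in> {u..u+h}" "\<eta> \<in> {v..v+h}"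
    "f (u+h, v+h) - f (u, v+h) - f (u+h, v) + f (u, v) = h\<^sup>2 * du (dv f) (\<xi>, \<eta>)"
proof -
  obtain \<eta> where \<eta>: "v < \<eta>" "\<eta> < v+h"
    "(f (u+h, v+h) - f (u, v+h)) - (f (u+h, v) - f (u, v)) = h * (dv f (u+h, \<eta>) - dv f (u, \<eta>))"
    using MVT2[of v "v+h" "\<lambda>t. f (u+h, t) - f (u, t)" "\<lambda>t. dv f (u+h, t) - dv f (u, t)"] h box
    by (force intro!: DERIV_diff C1_on_has_dv[OF f])
  obtain \<xi> where \<xi>: "u < \<xi>" "\<xi> < u+h"
    "dv f (u+h, \<eta>) - dv f (u, \<eta>) = h * du (dv f) (\<xi>, \<eta>)"
    using MVT2[of u "u+h" "\<lambda>s. dv f (s, \<eta>)" "\<lambda>s. du (dv f) (s, \<eta>)"] h box \<eta>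
    by (force intro!: C1_on_has_du[OF fv])
  show ?thesis
    by (rule that[of \<xi> \<eta>]) (use \<xi> \<eta> in \<open>auto simp: power2_eq_square algebra_simps\<close>)
qed

lemma dv_du_eq_du_dv:
  assumes Q: "open Q" and f: "C1_on Q f" and fu: "C1_on Q (du f)" and fv: "C1_on Q (dv f)"
    and p: "p \<in> Q"
  shows "dv (du f) p = du (dv f) p"
proof -
  obtain u v where p_eq: "p = (u, v)" by fastforce
  have close: "\<bar>dv (du f) p - du (dv f) p\<bar> < 2 * e" if e: "e > 0" for e
  proof -
    obtain d0 where d0: "d0 > 0" "ball p d0 \<subseteq> Q"
      using Q p open_contains_ball by blast
    obtain d1 where d1: "d1 > 0" "\<forall>q\<in>Q. dist q p < d1 \<longrightarrow> dist (dv (du f) q) (dv (du f) p) < e"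
      using fu p e unfolding C1_on_def continuous_on_iff by blast
    obtain d2 where d2: "d2 > 0" "\<forall>q\<in>Q. dist q p < d2 \<longrightarrow> dist (du (dv f) q) (du (dv f) p) < e"
      using fv p e unfolding C1_on_def continuous_on_iff by blast
    define h where "h = min d0 (min d1 d2) / 3"
    have h: "h > 0" using d0 d1 d2 by (simp add: h_def)
    have near: "dist q p < min d0 (min d1 d2)" if q: "q \<in> {u..u+h} \<times> {v..v+h}" for q
    proof -
      obtain s t where "q = (s, t)" "s \<in> {u..u+h}" "t \<in> {v..v+h}" using q by blast
      then have "dist q p \<le> 2 * h" using dist_Pair_le_sum[of s t u v] p_eq by auto
      then show ?thesis using h unfolding h_def by linarith
    qed
    have box: "{u..u+h} \<times> {v..v+h} \<subseteq> Q"
      using near d0 by (force simp: dist_commute)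
    obtain \<xi> \<eta> where \<xi>\<eta>: "(\<xi>, \<eta>) \<in> {u..u+h} \<times> {v..v+h}"
      "f (u+h, v+h) - f (u, v+h) - f (u+h, v) + f (u, v) = h\<^sup>2 * dv (du f) (\<xi>, \<eta>)"
      using second_difference_dv_du[OF f fu h box] by blast
    obtain \<xi>' \<eta>' where \<xi>\<eta>': "(\<xi>', \<eta>') \<in> {u..u+h} \<times> {v..v+h}"
      "f (u+h, v+h) - f (u, v+h) - f (u+h, v) + f (u, v) = h\<^sup>2 * du (dv f) (\<xi>', \<eta>')"
      using second_difference_du_dv[OF f fv h box] by blast
    have "dv (du f) (\<xi>, \<eta>) = du (dv f) (\<xi>', \<eta>')"
      using \<xi>\<eta>(2) \<xi>\<eta>'(2) h by simp
    moreover have "dist (dv (du f) (\<xi>, \<eta>)) (dv (du f) p) < e"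
      using d1(2) near[OF \<xi>\<eta>(1)] subsetD[OF box \<xi>\<eta>(1)] by simp
    moreover have "dist (du (dv f) (\<xi>', \<eta>')) (du (dv f) p) < e"
      using d2(2) near[OF \<xi>\<eta>'(1)] subsetD[OF box \<xi>\<eta>'(1)] by simp
    ultimately show ?thesis by (simp add: dist_real_def)
  qed
  show ?thesis
    using close[of "\<bar>dv (du f) p - du (dv f) p\<bar> / 2"] by fastforce
qed

lemma abs_diff_le_by_majorant:
  fixes h k h' k' :: "real \<Rightarrow> real"
  assumes ax: "a \<le> x"
    and h: "\<forall>s\<in>{a..x}. (h has_real_derivative h' s) (at s)"
    and k: "\<forall>s\<in>{a..x}. (k has_real_derivative k' s) (at s)"
    and majorant: "\<forall>s\<in>{a..x}. \<bar>h' s\<bar> \<le> k' s"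
  shows "\<bar>h x - h a\<bar> \<le> k x - k a"
proof -
  have "(\<lambda>s. k s - h s) a \<le> (\<lambda>s. k s - h s) x"
  proof (rule DERIV_nonneg_imp_nondecreasing[OF ax])
    fix s assume "a \<le> s" "s \<le> x"
    then show "\<exists>y. ((\<lambda>s. k s - h s) has_real_derivative y) (at s) \<and> 0 \<le> y"
      using h k majorant by (intro exI[of _ "k' s - h' s"]) (auto intro!: DERIV_diff simp: abs_le_iff)
  qed
  moreover have "(\<lambda>s. k s + h s) a \<le> (\<lambda>s. k s + h s) x"
  proof (rule DERIV_nonneg_imp_nondecreasing[OF ax])
    fix s assume "a \<le> s" "s \<le> x"
    then show "\<exists>y. ((\<lambda>s. k s + h s) has_real_derivative y) (at s) \<and> 0 \<le> y"
      using h k majorant[THEN bspec, of s]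
      by (intro exI[of _ "k' s + h' s"]) (auto intro!: DERIV_add simp: abs_le_iff)
  qed
  ultimately show ?thesis by simp
qed

text \<open>Applied along a row with \<open>h = r \<partial>\<^sub>v\<phi>\<close>, \<open>g = r \<partial>\<^sub>u\<phi>\<close>, \<open>k = r \<partial>\<^sub>vr\<close> and \<open>\<rho> = r\<close>.
  The majorant \<open>K M \<rho>\<^sup>-\<^sup>P / (P c)\<close> grows at least as fast as \<open>|h|\<close> because \<open>-\<rho> \<rho>' \<ge> c\<close>.\<close>

lemma transport_estimate:
  fixes h g k \<rho> \<rho>' :: "real \<Rightarrow> real"
  assumes ax: "a \<le> x" and c: "c > 0" and P: "P > 0"
    and \<rho>: "\<forall>s\<in>{a..x}. (\<rho> has_real_derivative \<rho>' s) (at s)"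
    and h: "\<forall>s\<in>{a..x}. (h has_real_derivative - k s * g s / (\<rho> s)\<^sup>2) (at s)"
    and \<rho>_pos: "\<forall>s\<in>{a..x}. \<rho> s > 0"
    and slope: "\<forall>s\<in>{a..x}. c \<le> - \<rho> s * \<rho>' s"
    and k_bound: "\<forall>s\<in>{a..x}. \<bar>k s\<bar> \<le> K"
    and g_bound: "\<forall>s\<in>{a..x}. \<bar>g s\<bar> * \<rho> s powr P \<le> M"
  shows "\<bar>h x\<bar> \<le> \<bar>h a\<bar> + K * M / (P * c) / \<rho> x powr P"
proof -
  have K: "K \<ge> 0" using k_bound ax by (auto intro: order_trans[rotated])
  have M: "M \<ge> 0" using g_bound ax by (meson abs_ge_zero atLeastAtMost_iff order_refl order_trans
      powr_ge_zero zero_le_mult_iff)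
  define \<kappa> where "\<kappa> = K * M / (P * c)"
  define m where "m s = \<kappa> * \<rho> s powr (-P)" for s
  define m' where "m' s = \<kappa> * (- P * \<rho> s powr (- P - 1) * \<rho>' s)" for s
  have m: "\<forall>s\<in>{a..x}. (m has_real_derivative m' s) (at s)"
  proof
    fix s assume "s \<in> {a..x}"
    then have "((\<lambda>s. \<rho> s powr (-P)) has_real_derivative - P * \<rho> s powr (- P - 1) * \<rho>' s) (at s)"
      using \<rho> \<rho>_pos DERIV_fun_powr[of \<rho> "\<rho>' s" s "-P"] by simp
    then show "(m has_real_derivative m' s) (at s)"
      unfolding m_def m'_def by (rule DERIV_cmult)
  qed
  have majorant: "\<bar>- k s * g s / (\<rho> s)\<^sup>2\<bar> \<le> m' s" if s: "s \<in> {a..x}" for s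
  proof -
    have \<rho>s: "\<rho> s > 0" using \<rho>_pos s by blast
    have g: "\<bar>g s\<bar> \<le> M / \<rho> s powr P"
      using g_bound s \<rho>s by (simp add: pos_le_divide_eq)
    have "\<bar>- k s * g s / (\<rho> s)\<^sup>2\<bar> = \<bar>k s\<bar> * \<bar>g s\<bar> / (\<rho> s)\<^sup>2"
      by (simp add: abs_mult)
    also have "\<dots> \<le> K * (M / \<rho> s powr P) / (\<rho> s)\<^sup>2"
      using k_bound g s K by (intro divide_right_mono mult_mono) auto
    also have "\<dots> = K * M / c * c / (\<rho> s powr P * (\<rho> s)\<^sup>2)"
      using c by simp
    also have "\<dots> \<le> K * M / c * (- \<rho> s * \<rho>' s) / (\<rho> s powr P * (\<rho> s)\<^sup>2)"
      using slope s c K M by (intro divide_right_mono mult_left_mono) auto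
    also have "\<dots> = m' s"
      using \<rho>s P c by (simp add: m'_def \<kappa>_def powr_diff powr_minus field_simps power2_eq_square)
    finally show ?thesis .
  qed
  have "\<bar>h x - h a\<bar> \<le> m x - m a"
    by (rule abs_diff_le_by_majorant[OF ax h m]) (use majorant in blast)
  moreover have "m a \<ge> 0" using K M P c by (simp add: m_def \<kappa>_def)
  ultimately show ?thesis
    by (simp add: m_def \<kappa>_def powr_minus divide_inverse)
qed

lemma weighted_transport_estimate:
  fixes h g k \<rho> \<rho>' :: "real \<Rightarrow> real"
  assumes ax: "a \<le> x" and c: "c > 0" and P: "P > 0"
    and \<rho>: "\<forall>s\<in>{a..x}. (\<rho> has_real_derivative \<rho>' s) (at s)"
    and h: "\<forall>s\<in>{a..x}. (h has_real_derivative - k s * g s / (\<rho> s)\<^sup>2) (at s)"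
    and \<rho>_pos: "\<forall>s\<in>{a..x}. \<rho> s > 0"
    and slope: "\<forall>s\<in>{a..x}. c \<le> - \<rho> s * \<rho>' s"
    and k_bound: "\<forall>s\<in>{a..x}. \<bar>k s\<bar> \<le> K"
    and g_bound: "\<forall>s\<in>{a..x}. \<bar>g s\<bar> * \<rho> s powr P \<le> M"
  shows "\<bar>h x\<bar> * \<rho> x powr P \<le> \<bar>h a\<bar> * \<rho> a powr P + K * M / (P * c)"
proof -
  have \<rho>x: "\<rho> x > 0" using \<rho>_pos ax by simp
  have "\<bar>h x\<bar> * \<rho> x powr P \<le> (\<bar>h a\<bar> + K * M / (P * c) / \<rho> x powr P) * \<rho> x powr P"
    using transport_estimate[OF assms] by (simp add: mult_right_mono)
  also have "\<dots> = \<bar>h a\<bar> * \<rho> x powr P + K * M / (P * c)"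
    using \<rho>x by (simp add: distrib_right)
  moreover have "\<rho> x \<le> \<rho> a"
  proof (rule DERIV_nonpos_imp_nonincreasing[OF ax])
    fix s assume "a \<le> s" "s \<le> x"
    then have s: "s \<in> {a..x}" by simp
    then have "\<rho> s * \<rho>' s < 0" and "\<rho> s > 0" using slope \<rho>_pos c by force+
    then have "\<rho>' s \<le> 0" by (simp add: mult_less_0_iff)
    then show "\<exists>y. (\<rho> has_real_derivative y) (at s) \<and> y \<le> 0"
      using \<rho> s by blast
  qed
  then have "\<bar>h a\<bar> * \<rho> x powr P \<le> \<bar>h a\<bar> * \<rho> a powr P"
    using \<rho>x P by (auto intro!: mult_left_mono powr_mono2)
  ultimately show ?thesis by simp
qed

lemma mutual_linear_bounds:
  fixes x y A B \<theta>1 \<theta>2 :: real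
  assumes x: "x \<le> A + \<theta>1 * y" and y: "y \<le> B + \<theta>2 * x"
    and \<theta>: "\<theta>1 \<ge> 0" "\<theta>2 \<ge> 0" "\<theta>1 * \<theta>2 < 1"
  shows "x \<le> (A + \<theta>1 * B) / (1 - \<theta>1 * \<theta>2)" and "y \<le> (B + \<theta>2 * A) / (1 - \<theta>1 * \<theta>2)"
proof -
  have "x * (1 - \<theta>1 * \<theta>2) \<le> A + \<theta>1 * B"
    using x mult_left_mono[OF y \<theta>(1)] by (simp add: algebra_simps)
  then show "x \<le> (A + \<theta>1 * B) / (1 - \<theta>1 * \<theta>2)" using \<theta>(3) by (simp add: pos_le_divide_eq)
  have "y * (1 - \<theta>1 * \<theta>2) \<le> B + \<theta>2 * A"
    using y mult_left_mono[OF x \<theta>(2)] by (simp add: algebra_simps)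
  then show "y \<le> (B + \<theta>2 * A) / (1 - \<theta>1 * \<theta>2)" using \<theta>(3) by (simp add: pos_le_divide_eq)
qed

lemma mutual_sup_bounds:
  fixes F G :: "'a \<Rightarrow> real"
  assumes bdd: "bdd_above (F ` T)" "bdd_above (G ` T)"
    and F: "\<And>M. \<forall>q\<in>T. G q \<le> M \<Longrightarrow> \<forall>q\<in>T. F q \<le> A + \<theta>1 * M"
    and G: "\<And>M. \<forall>q\<in>T. F q \<le> M \<Longrightarrow> \<forall>q\<in>T. G q \<le> B + \<theta>2 * M"
    and \<theta>: "\<theta>1 \<ge> 0" "\<theta>2 \<ge> 0" "\<theta>1 * \<theta>2 < 1"
  shows "\<forall>q\<in>T. F q \<le> (A + \<theta>1 * B) / (1 - \<theta>1 * \<theta>2) \<and> G q \<le> (B + \<theta>2 * A) / (1 - \<theta>1 * \<theta>2)"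
proof (cases "T = {}")
  case False
  define MF where "MF = (SUP q\<in>T. F q)"
  define MG where "MG = (SUP q\<in>T. G q)"
  have F_MF: "\<forall>q\<in>T. F q \<le> MF" and G_MG: "\<forall>q\<in>T. G q \<le> MG"
    unfolding MF_def MG_def using bdd by (auto intro: cSUP_upper)
  have "MF \<le> A + \<theta>1 * MG"
    unfolding MF_def using F[OF G_MG] False by (intro cSUP_least) auto
  moreover have "MG \<le> B + \<theta>2 * MF"
    unfolding MG_def using G[OF F_MF] False by (intro cSUP_least) auto
  ultimately show ?thesis
    using mutual_linear_bounds[OF _ _ \<theta>] F_MF G_MG by (meson order_trans)
qed simp

lemma bdd_above_image_compact:
  fixes w :: "'a::topological_space \<Rightarrow> real"
  assumes "continuous_on Q w" "compact K" "K \<subseteq> Q"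
  shows "bdd_above (w ` K)"
  using assms by (meson bounded_imp_bdd_above compact_continuous_image compact_imp_bounded
      continuous_on_subset)

locale spherical_wave =
  fixes Q :: "(real \<times> real) set" and r \<phi> :: "real \<times> real \<Rightarrow> real"
  assumes open_Q: "open Q"
    and r_C1: "C1_on Q r"
    and \<phi>_C2: "C2_on Q \<phi>"
    and r_pos: "\<forall>p\<in>Q. r p > 0"
    and wave_eq: "\<forall>p\<in>Q. r p * du (dv \<phi>) p = - du r p * dv \<phi> p - dv r p * du \<phi> p"
begin

lemma du_\<phi>_C1: "C1_on Q (du \<phi>)" and dv_\<phi>_C1: "C1_on Q (dv \<phi>)"
  using \<phi>_C2 by (simp_all add: C2_on_def)

lemma has_du_r_dv_\<phi>:
  assumes p: "(u, v) \<in> Q"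
  shows "((\<lambda>s. r (s, v) * dv \<phi> (s, v)) has_real_derivative
           - (r (u, v) * dv r (u, v)) * (r (u, v) * du \<phi> (u, v)) / (r (u, v))\<^sup>2) (at u)"
proof (rule DERIV_cong)
  show "((\<lambda>s. r (s, v) * dv \<phi> (s, v)) has_real_derivative
          du r (u, v) * dv \<phi> (u, v) + r (u, v) * du (dv \<phi>) (u, v)) (at u)"
    using DERIV_mult[OF C1_on_has_du[OF r_C1 p] C1_on_has_du[OF dv_\<phi>_C1 p]]
    by (simp add: algebra_simps)
  show "du r (u, v) * dv \<phi> (u, v) + r (u, v) * du (dv \<phi>) (u, v)
          = - (r (u, v) * dv r (u, v)) * (r (u, v) * du \<phi> (u, v)) / (r (u, v))\<^sup>2"
    using wave_eq r_pos p by (auto simp: power2_eq_square field_simps)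
qed

lemma has_dv_r_du_\<phi>:
  assumes p: "(u, v) \<in> Q"
  shows "((\<lambda>t. r (u, t) * du \<phi> (u, t)) has_real_derivative
           - (r (u, v) * du r (u, v)) * (r (u, v) * dv \<phi> (u, v)) / (r (u, v))\<^sup>2) (at v)"
proof (rule DERIV_cong)
  show "((\<lambda>t. r (u, t) * du \<phi> (u, t)) has_real_derivative
          dv r (u, v) * du \<phi> (u, v) + r (u, v) * dv (du \<phi>) (u, v)) (at v)"
    using DERIV_mult[OF C1_on_has_dv[OF r_C1 p] C1_on_has_dv[OF du_\<phi>_C1 p]]
    by (simp add: algebra_simps)
  have "dv (du \<phi>) (u, v) = du (dv \<phi>) (u, v)"
    using dv_du_eq_du_dv open_Q \<phi>_C2 p by (simp add: C2_on_def)
  then show "dv r (u, v) * du \<phi> (u, v) + r (u, v) * dv (du \<phi>) (u, v)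
          = - (r (u, v) * du r (u, v)) * (r (u, v) * dv \<phi> (u, v)) / (r (u, v))\<^sup>2"
    using wave_eq r_pos p by (auto simp: power2_eq_square field_simps)
qed

end

definition corner_square :: "real \<Rightarrow> (real \<times> real) set" where
  "corner_square U = {U..0} \<times> {U..0} - {(0, 0)}"

lemma corner_square_row:
  "(u, v) \<in> corner_square U \<Longrightarrow> s \<in> {U..u} \<Longrightarrow> (s, v) \<in> corner_square U"
  and corner_square_column:
  "(u, v) \<in> corner_square U \<Longrightarrow> t \<in> {U..v} \<Longrightarrow> (u, t) \<in> corner_square U"
  by (auto simp: corner_square_def)

locale corner_estimate = spherical_wave +
  fixes U c1 c2 K1 K2 P :: real
  assumes U_neg: "U < 0"
    and square_in_Q: "corner_square U \<subseteq> Q"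
    and r_tendsto_0: "(r \<longlongrightarrow> 0) (at (0, 0) within Q)"
    and du_slope: "\<forall>p\<in>corner_square U. c1 \<le> - r p * du r p \<and> - r p * du r p \<le> K1"
    and dv_slope: "\<forall>p\<in>corner_square U. c2 \<le> - r p * dv r p \<and> - r p * dv r p \<le> K2"
    and c1_pos: "c1 > 0" and c2_pos: "c2 > 0" and P_pos: "P > 0"
    and coupling_small: "K1 * K2 < P\<^sup>2 * c1 * c2"
begin

definition wu :: "real \<times> real \<Rightarrow> real" where
  "wu p = \<bar>r p * du \<phi> p\<bar> * r p powr P"

definition wv :: "real \<times> real \<Rightarrow> real" where
  "wv p = \<bar>r p * dv \<phi> p\<bar> * r p powr P"

lemma square_trapped:
  assumes p: "p \<in> corner_square U"
  shows "du r p < 0 \<and> dv r p < 0"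
proof -
  have "r p > 0" using p square_in_Q r_pos by blast
  moreover have "r p * du r p < 0" "r p * dv r p < 0"
    using p du_slope dv_slope c1_pos c2_pos by force+
  ultimately show ?thesis by (simp add: mult_less_0_iff)
qed

lemma r_antimono_row:
  assumes p: "(u, v) \<in> corner_square U" and s: "s \<in> {U..u}"
  shows "r (u, v) \<le> r (s, v)"
proof (rule DERIV_nonpos_imp_nonincreasing[where f="\<lambda>s. r (s, v)"])
  fix x assume "s \<le> x" "x \<le> u"
  then have "(x, v) \<in> corner_square U" using corner_square_row[OF p] s by simp
  then show "\<exists>y. ((\<lambda>s. r (s, v)) has_real_derivative y) (at x) \<and> y \<le> 0"
    using C1_on_has_du[OF r_C1] square_in_Q square_trapped by (fastforce intro: less_imp_le)
qed (use s in simp)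

lemma r_antimono_column:
  assumes p: "(u, v) \<in> corner_square U" and t: "t \<in> {U..v}"
  shows "r (u, v) \<le> r (u, t)"
proof (rule DERIV_nonpos_imp_nonincreasing[where f="\<lambda>t. r (u, t)"])
  fix x assume "t \<le> x" "x \<le> v"
  then have "(u, x) \<in> corner_square U" using corner_square_column[OF p] t by simp
  then show "\<exists>y. ((\<lambda>t. r (u, t)) has_real_derivative y) (at x) \<and> y \<le> 0"
    using C1_on_has_dv[OF r_C1] square_in_Q square_trapped by (fastforce intro: less_imp_le)
qed (use t in simp)

lemma row_estimate:
  assumes p: "(u, v) \<in> corner_square U" and M: "\<forall>s\<in>{U..u}. wu (s, v) \<le> M"
  shows "wv (u, v) \<le> wv (U, v) + K2 * M / (P * c1)"
proof -
  have row: "(s, v) \<in> corner_square U" "(s, v) \<in> Q" if "s \<in> {U..u}" for s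
    using corner_square_row[OF p that] square_in_Q by auto
  have "\<bar>r (u, v) * dv \<phi> (u, v)\<bar> * r (u, v) powr P
          \<le> \<bar>r (U, v) * dv \<phi> (U, v)\<bar> * r (U, v) powr P + K2 * M / (P * c1)"
  proof (rule weighted_transport_estimate[where g="\<lambda>s. r (s, v) * du \<phi> (s, v)"
        and k="\<lambda>s. r (s, v) * dv r (s, v)" and \<rho>'="\<lambda>s. du r (s, v)"])
    show "U \<le> u" using p by (simp add: corner_square_def)
    show "\<forall>s\<in>{U..u}. ((\<lambda>s. r (s, v)) has_real_derivative du r (s, v)) (at s)"
      using row C1_on_has_du[OF r_C1] by blast
    show "\<forall>s\<in>{U..u}. ((\<lambda>s. r (s, v) * dv \<phi> (s, v)) has_real_derivative
            - (r (s, v) * dv r (s, v)) * (r (s, v) * du \<phi> (s, v)) / (r (s, v))\<^sup>2) (at s)"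
      using row has_du_r_dv_\<phi> by blast
    show "\<forall>s\<in>{U..u}. 0 < r (s, v)" using row r_pos by blast
    show "\<forall>s\<in>{U..u}. c1 \<le> - r (s, v) * du r (s, v)" using row du_slope by force
    show "\<forall>s\<in>{U..u}. \<bar>r (s, v) * dv r (s, v)\<bar> \<le> K2"
      using row dv_slope c2_pos by (force simp: abs_if)
    show "\<forall>s\<in>{U..u}. \<bar>r (s, v) * du \<phi> (s, v)\<bar> * r (s, v) powr P \<le> M"
      using M by (simp add: wu_def)
  qed (use c1_pos P_pos in auto)
  then show ?thesis by (simp add: wv_def)
qed

lemma column_estimate:
  assumes p: "(u, v) \<in> corner_square U" and M: "\<forall>t\<in>{U..v}. wv (u, t) \<le> M"
  shows "wu (u, v) \<le> wu (u, U) + K1 * M / (P * c2)"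
proof -
  have column: "(u, t) \<in> corner_square U" "(u, t) \<in> Q" if "t \<in> {U..v}" for t
    using corner_square_column[OF p that] square_in_Q by auto
  have "\<bar>r (u, v) * du \<phi> (u, v)\<bar> * r (u, v) powr P
          \<le> \<bar>r (u, U) * du \<phi> (u, U)\<bar> * r (u, U) powr P + K1 * M / (P * c2)"
  proof (rule weighted_transport_estimate[where g="\<lambda>t. r (u, t) * dv \<phi> (u, t)"
        and k="\<lambda>t. r (u, t) * du r (u, t)" and \<rho>'="\<lambda>t. dv r (u, t)"])
    show "U \<le> v" using p by (simp add: corner_square_def)
    show "\<forall>t\<in>{U..v}. ((\<lambda>t. r (u, t)) has_real_derivative dv r (u, t)) (at t)"
      using column C1_on_has_dv[OF r_C1] by blast
    show "\<forall>t\<in>{U..v}. ((\<lambda>t. r (u, t) * du \<phi> (u, t)) has_real_derivative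
            - (r (u, t) * du r (u, t)) * (r (u, t) * dv \<phi> (u, t)) / (r (u, t))\<^sup>2) (at t)"
      using column has_dv_r_du_\<phi> by blast
    show "\<forall>t\<in>{U..v}. 0 < r (u, t)" using column r_pos by blast
    show "\<forall>t\<in>{U..v}. c2 \<le> - r (u, t) * dv r (u, t)" using column dv_slope by force
    show "\<forall>t\<in>{U..v}. \<bar>r (u, t) * du r (u, t)\<bar> \<le> K1"
      using column du_slope c1_pos by (force simp: abs_if)
    show "\<forall>t\<in>{U..v}. \<bar>r (u, t) * dv \<phi> (u, t)\<bar> * r (u, t) powr P \<le> M"
      using M by (simp add: wv_def)
  qed (use c2_pos P_pos in auto)
  then show ?thesis by (simp add: wu_def)
qed

lemma origin_notin_Q: "(0, 0) \<notin> Q"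
proof
  assume origin: "(0, 0) \<in> Q"
  then have "(r \<longlongrightarrow> r (0, 0)) (at (0, 0) within Q)"
    using r_C1 by (simp add: C1_on_def continuous_on_def)
  moreover have "at (0, 0) within Q \<noteq> bot"
    by (simp add: at_within_open[OF origin open_Q])
  ultimately show False
    using tendsto_unique[OF _ _ r_tendsto_0] r_pos origin by force
qed

lemma corner_square_eq:
  "corner_square U = {(u, v). U \<le> u \<and> u \<le> 0 \<and> U \<le> v \<and> v \<le> 0 \<and> (u, v) \<in> Q \<and> r (u, v) > 0}"
  using square_in_Q r_pos origin_notin_Q by (auto simp: corner_square_def)

lemma K_pos: "K1 > 0" "K2 > 0"
proof -
  have "(U, U) \<in> corner_square U" using U_neg by (simp add: corner_square_def)
  then have "c1 \<le> K1" "c2 \<le> K2" using du_slope dv_slope by fastforce+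
  then show "K1 > 0" "K2 > 0" using c1_pos c2_pos by linarith+
qed

lemma continuous_on_wu: "continuous_on Q wu" and continuous_on_wv: "continuous_on Q wv"
  using r_C1 du_\<phi>_C1 dv_\<phi>_C1 r_pos unfolding wu_def wv_def C1_on_def
  by (auto intro!: continuous_intros)

lemma bdd_above_level_set:
  fixes w :: "real \<times> real \<Rightarrow> real"
  assumes w: "continuous_on Q w" and \<delta>: "\<delta> > 0"
  shows "bdd_above (w ` {p \<in> corner_square U. \<delta> \<le> r p})"
proof -
  obtain \<eta> where \<eta>: "\<eta> > 0" "\<forall>p\<in>Q. p \<noteq> (0, 0) \<and> dist p (0, 0) < \<eta> \<longrightarrow> dist (r p) 0 < \<delta>"
    using tendstoD[OF r_tendsto_0 \<delta>] unfolding eventually_at by blast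
  define K where "K = {U..0} \<times> {U..0} - ball (0, 0) \<eta>"
  have K: "compact K" unfolding K_def by (intro compact_diff compact_Times) auto
  have "K \<subseteq> corner_square U"
    using \<eta>(1) by (auto simp: K_def corner_square_def)
  then have KQ: "K \<subseteq> Q" using square_in_Q by blast
  have level_set: "{p \<in> corner_square U. \<delta> \<le> r p} \<subseteq> K"
  proof
    fix p assume p: "p \<in> {p \<in> corner_square U. \<delta> \<le> r p}"
    then have "p \<in> Q" "p \<noteq> (0, 0)" using square_in_Q by (auto simp: corner_square_def)
    then have "\<not> dist p (0, 0) < \<eta>" using \<eta>(2) p r_pos by (force simp: dist_real_def)
    then show "p \<in> K" using p by (simp add: K_def corner_square_def dist_commute)
  qed
  show ?thesis
    by (rule bdd_above_mono[OF bdd_above_image_compact[OF w K KQ] image_mono[OF level_set]])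
qed

lemma row_bound_on_level_set:
  assumes A: "\<forall>t\<in>{U..0}. wv (U, t) \<le> A"
    and M: "\<forall>q\<in>{p \<in> corner_square U. \<delta> \<le> r p}. wu q \<le> M"
    and q: "(u, v) \<in> corner_square U" "\<delta> \<le> r (u, v)"
  shows "wv (u, v) \<le> A + K2 / (P * c1) * M"
proof -
  have "\<forall>s\<in>{U..u}. wu (s, v) \<le> M"
    using M corner_square_row[OF q(1)] r_antimono_row[OF q(1)] q(2) by fastforce
  then have "wv (u, v) \<le> wv (U, v) + K2 / (P * c1) * M"
    using row_estimate[OF q(1)] by simp
  then show ?thesis using A[THEN bspec, of v] q(1) by (auto simp: corner_square_def)
qed

lemma column_bound_on_level_set:
  assumes B: "\<forall>s\<in>{U..0}. wu (s, U) \<le> B"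
    and M: "\<forall>q\<in>{p \<in> corner_square U. \<delta> \<le> r p}. wv q \<le> M"
    and q: "(u, v) \<in> corner_square U" "\<delta> \<le> r (u, v)"
  shows "wu (u, v) \<le> B + K1 / (P * c2) * M"
proof -
  have "\<forall>t\<in>{U..v}. wv (u, t) \<le> M"
    using M corner_square_column[OF q(1)] r_antimono_column[OF q(1)] q(2) by fastforce
  then have "wu (u, v) \<le> wu (u, U) + K1 / (P * c2) * M"
    using column_estimate[OF q(1)] by simp
  then show ?thesis using B[THEN bspec, of u] q(1) by (auto simp: corner_square_def)
qed

lemma weights_bounded:
  obtains I where "\<forall>p\<in>corner_square U. wu p \<le> I \<and> wv p \<le> I"
proof -
  have "{U} \<times> {U..0} \<subseteq> corner_square U" "{U..0} \<times> {U} \<subseteq> corner_square U"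
    using U_neg by (auto simp: corner_square_def)
  then have "bdd_above (wv ` ({U} \<times> {U..0}))" "bdd_above (wu ` ({U..0} \<times> {U}))"
    using bdd_above_image_compact[OF continuous_on_wv] bdd_above_image_compact[OF continuous_on_wu]
      square_in_Q by (simp_all add: compact_Times)
  then obtain A B where "\<forall>q\<in>{U} \<times> {U..0}. wv q \<le> A" and "\<forall>q\<in>{U..0} \<times> {U}. wu q \<le> B"
    by (auto simp: bdd_above_def)
  then have A: "\<forall>t\<in>{U..0}. wv (U, t) \<le> A" and B: "\<forall>s\<in>{U..0}. wu (s, U) \<le> B"
    by blast+
  define \<theta>1 where "\<theta>1 = K2 / (P * c1)"
  define \<theta>2 where "\<theta>2 = K1 / (P * c2)"
  have "\<theta>1 * \<theta>2 = (K1 * K2) / (P\<^sup>2 * c1 * c2)"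
    by (simp add: \<theta>1_def \<theta>2_def power2_eq_square mult_ac)
  then have \<theta>: "\<theta>1 \<ge> 0" "\<theta>2 \<ge> 0" "\<theta>1 * \<theta>2 < 1"
    using K_pos c1_pos c2_pos P_pos coupling_small by (simp_all add: \<theta>1_def \<theta>2_def)
  define I where "I = max ((A + \<theta>1 * B) / (1 - \<theta>1 * \<theta>2)) ((B + \<theta>2 * A) / (1 - \<theta>1 * \<theta>2))"
  \<comment> \<open>The level sets \<open>r \<ge> \<delta>\<close> avoid the corner, so the suprema over them are finite; they
    contain the row and column segments ending in them because \<open>r\<close> decreases towards the corner.\<close>
  have "wu p \<le> I \<and> wv p \<le> I" if p: "p \<in> corner_square U" for p
  proof -
    have \<delta>: "r p > 0" using p square_in_Q r_pos by blast
    have "\<forall>q\<in>{q \<in> corner_square U. r p \<le> r q}.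
        wv q \<le> (A + \<theta>1 * B) / (1 - \<theta>1 * \<theta>2) \<and> wu q \<le> (B + \<theta>2 * A) / (1 - \<theta>1 * \<theta>2)"
      by (rule mutual_sup_bounds[OF bdd_above_level_set[OF continuous_on_wv \<delta>]
            bdd_above_level_set[OF continuous_on_wu \<delta>] _ _ \<theta>])
        (use row_bound_on_level_set[OF A] column_bound_on_level_set[OF B] in
          \<open>auto simp: \<theta>1_def \<theta>2_def\<close>)
    then have "wv p \<le> (A + \<theta>1 * B) / (1 - \<theta>1 * \<theta>2) \<and> wu p \<le> (B + \<theta>2 * A) / (1 - \<theta>1 * \<theta>2)"
      using p by blast
    then show ?thesis by (simp add: I_def le_max_iff_disj)
  qed
  then show ?thesis by (rule that[rule_format])
qed

lemma derivative_bounds: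
  obtains I where "I > 0"
    "\<forall>p\<in>corner_square U. \<bar>du \<phi> p\<bar> \<le> I / r p powr (1 + P) \<and> \<bar>dv \<phi> p\<bar> \<le> I / r p powr (1 + P)"
proof -
  obtain I where I: "\<forall>p\<in>corner_square U. wu p \<le> I \<and> wv p \<le> I" by (rule weights_bounded)
  have "\<bar>du \<phi> p\<bar> \<le> max I 1 / r p powr (1 + P) \<and> \<bar>dv \<phi> p\<bar> \<le> max I 1 / r p powr (1 + P)"
    if p: "p \<in> corner_square U" for p
  proof -
    have rp: "r p > 0" using p square_in_Q r_pos by blast
    then have "r p powr (1 + P) = r p * r p powr P" by (simp add: powr_add)
    then have "\<bar>du \<phi> p\<bar> * r p powr (1 + P) = wu p" "\<bar>dv \<phi> p\<bar> * r p powr (1 + P) = wv p"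
      using rp by (simp_all add: wu_def wv_def abs_mult)
    then show ?thesis using I p rp by (auto simp: pos_le_divide_eq)
  qed
  then show ?thesis using that[of "max I 1"] by simp
qed

end

lemma eventually_near_negative_limit:
  fixes f :: "'a \<Rightarrow> real"
  assumes f: "(f \<longlongrightarrow> - C) F" and C: "C > 0"
  shows "eventually (\<lambda>x. 2 * C / 3 \<le> - f x \<and> - f x \<le> 4 * C / 3) F"
proof -
  have "eventually (\<lambda>x. dist (f x) (- C) < C / 3) F" using C by (intro tendstoD[OF f]) simp
  then show ?thesis by (rule eventually_mono) (simp only: dist_real_def abs_less_iff; linarith)
qed

lemma dist_origin_corner_square:
  assumes "p \<in> corner_square U"
  shows "dist p (0, 0) \<le> - 2 * U"
proof -
  obtain u v where p: "p = (u, v)" "U \<le> u" "u \<le> 0" "U \<le> v" "v \<le> 0"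
    using assms by (auto simp: corner_square_def)
  then show ?thesis using dist_Pair_le_sum[of u v 0 0] by simp
qed

lemma corner_square_below_curve:
  fixes b :: "real \<Rightarrow> real"
  assumes b: "\<forall>u\<in>{-\<epsilon><..<\<epsilon>}. (b has_real_derivative deriv b u) (at u)"
    and b_decreasing: "\<forall>u\<in>{-\<epsilon><..<\<epsilon>}. deriv b u < 0"
    and b0: "b 0 = 0"
    and Q_below_b: "\<forall>u v. (u, v) \<in> ball (0, 0) \<epsilon> \<longrightarrow> ((u, v) \<in> Q \<longleftrightarrow> v < b u)"
    and U: "- \<epsilon> / 2 < U"
  shows "corner_square U \<subseteq> Q"
proof safe
  fix u v assume p: "(u, v) \<in> corner_square U"
  then have "(u, v) \<in> ball (0, 0) \<epsilon>"
    using dist_origin_corner_square[OF p] U by (simp add: dist_commute)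
  moreover have "v < b u"
  proof (cases "u < 0")
    case True
    have "-\<epsilon> < u" using p U by (simp add: corner_square_def)
    then have "b 0 < b u"
      by (intro DERIV_neg_imp_decreasing[OF True]) (use b b_decreasing p in force)
    then show ?thesis using p b0 by (simp add: corner_square_def)
  next
    case False
    then show ?thesis using p b0 by (auto simp: corner_square_def)
  qed
  ultimately show "(u, v) \<in> Q" using Q_below_b by blast
qed

lemma corner_square_exists:
  fixes b :: "real \<Rightarrow> real" and r :: "real \<times> real \<Rightarrow> real"
  assumes eps: "\<epsilon> > 0"
    and b: "\<forall>u\<in>{-\<epsilon><..<\<epsilon>}. (b has_real_derivative deriv b u) (at u)"
    and b_decreasing: "\<forall>u\<in>{-\<epsilon><..<\<epsilon>}. deriv b u < 0"
    and b0: "b 0 = 0"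
    and Q_below_b: "\<forall>u v. (u, v) \<in> ball (0, 0) \<epsilon> \<longrightarrow> ((u, v) \<in> Q \<longleftrightarrow> v < b u)"
    and C1: "C1 > 0" and C2: "C2 > 0"
    and lim_u: "((\<lambda>p. r p * du r p) \<longlongrightarrow> - C1) (at (0, 0) within Q)"
    and lim_v: "((\<lambda>p. r p * dv r p) \<longlongrightarrow> - C2) (at (0, 0) within Q)"
  obtains U where "U < 0" "corner_square U \<subseteq> Q"
    "\<forall>p\<in>corner_square U. 2 * C1 / 3 \<le> - r p * du r p \<and> - r p * du r p \<le> 4 * C1 / 3"
    "\<forall>p\<in>corner_square U. 2 * C2 / 3 \<le> - r p * dv r p \<and> - r p * dv r p \<le> 4 * C2 / 3"
proof -
  obtain \<eta> where \<eta>: "\<eta> > 0" "\<forall>p\<in>Q. p \<noteq> (0, 0) \<and> dist p (0, 0) < \<eta> \<longrightarrow>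
      (2 * C1 / 3 \<le> - (r p * du r p) \<and> - (r p * du r p) \<le> 4 * C1 / 3) \<and>
      (2 * C2 / 3 \<le> - (r p * dv r p) \<and> - (r p * dv r p) \<le> 4 * C2 / 3)"
    using eventually_conj[OF eventually_near_negative_limit[OF lim_u C1]
        eventually_near_negative_limit[OF lim_v C2]]
    unfolding eventually_at by blast
  define U where "U = - min \<eta> \<epsilon> / 4"
  have U: "U < 0" "- \<epsilon> / 2 < U" and square_near: "\<forall>p\<in>corner_square U. dist p (0, 0) < \<eta>"
    using \<eta>(1) eps dist_origin_corner_square by (fastforce simp: U_def)+
  have square_in_Q: "corner_square U \<subseteq> Q"
    by (rule corner_square_below_curve[OF b b_decreasing b0 Q_below_b U(2)])
  have "p \<in> Q" "p \<noteq> (0, 0)" if "p \<in> corner_square U" for p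
    using that square_in_Q by (auto simp: corner_square_def)
  then show ?thesis
    using that[OF U(1) square_in_Q] \<eta>(2) square_near by simp
qed

lemma coupling_of_thirds:
  fixes C1 C2 P :: real
  assumes "C1 > 0" "C2 > 0" "P > 2"
  shows "4 * C1 / 3 * (4 * C2 / 3) < P\<^sup>2 * (2 * C1 / 3) * (2 * C2 / 3)"
proof -
  have "4 * C1 / 3 * (4 * C2 / 3) = 2\<^sup>2 * (2 * C1 / 3 * (2 * C2 / 3))" by simp
  also have "\<dots> < P\<^sup>2 * (2 * C1 / 3 * (2 * C2 / 3))"
    using assms by (intro mult_strict_right_mono power_strict_mono) auto
  finally show ?thesis by (simp only: mult.assoc)
qed

theorem proposition4p2:
  fixes Q :: "(real \<times> real) set"
    and r \<Omega> \<phi> :: "real \<times> real \<Rightarrow> real"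
    and b :: "real \<Rightarrow> real"
    and \<epsilon> C1 C2 :: real
  assumes sol: "ESF_solution Q r \<Omega> \<phi>"
    and eps: "\<epsilon> > 0"
    and B_curve: "\<forall>u\<in>{-\<epsilon><..<\<epsilon>}. (b has_real_derivative deriv b u) (at u)"
    and B_C1: "continuous_on {-\<epsilon><..<\<epsilon>} (deriv b)"
    and B_spacelike: "\<forall>u\<in>{-\<epsilon><..<\<epsilon>}. deriv b u < 0"
    and P_on_B: "b 0 = 0"
    and Q_near_P: "\<forall>u v. (u, v) \<in> ball (0, 0) \<epsilon> \<longrightarrow> ((u, v) \<in> Q \<longleftrightarrow> v < b u)"
    and r_zero_on_B: "\<forall>u\<in>{-\<epsilon><..<\<epsilon>}. (r \<longlongrightarrow> 0) (at (u, b u) within Q)"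
    and C1_pos: "C1 > 0" and C2_pos: "C2 > 0"
    and lim_u: "((\<lambda>p. r p * du r p) \<longlongrightarrow> - C1) (at (0, 0) within Q)"
    and lim_v: "((\<lambda>p. r p * dv r p) \<longlongrightarrow> - C2) (at (0, 0) within Q)"
  shows "\<forall>\<alpha>::real. 0 < \<alpha> \<and> \<alpha> \<le> 1 \<longrightarrow>
           (\<exists>U' V' I0 :: real. U' < 0 \<and> V' < 0 \<and> I0 > 0 \<and>
              (let D0 = {(u, v). U' \<le> u \<and> u \<le> 0 \<and> V' \<le> v \<and> v \<le> 0
                                 \<and> (u, v) \<in> Q \<and> r (u, v) > 0}
               in D0 \<subseteq> trapped_region Q r \<and>
                  (\<forall>p\<in>D0. \<bar>du \<phi> p\<bar> \<le> I0 / r p powr (3 + \<alpha>)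
                         \<and> \<bar>dv \<phi> p\<bar> \<le> I0 / r p powr (3 + \<alpha>))))"
proof (intro allI impI)
  fix \<alpha> :: real assume \<alpha>: "0 < \<alpha> \<and> \<alpha> \<le> 1"
  interpret spherical_wave Q r \<phi>
    using sol by unfold_locales (auto simp: ESF_solution_def C2_on_def)
  obtain U where U: "U < 0" "corner_square U \<subseteq> Q"
    and slopes: "\<forall>p\<in>corner_square U. 2 * C1 / 3 \<le> - r p * du r p \<and> - r p * du r p \<le> 4 * C1 / 3"
      "\<forall>p\<in>corner_square U. 2 * C2 / 3 \<le> - r p * dv r p \<and> - r p * dv r p \<le> 4 * C2 / 3"
    by (rule corner_square_exists[OF eps B_curve B_spacelike P_on_B Q_near_P C1_pos C2_pos lim_u lim_v])
  interpret corner_estimate Q r \<phi> U "2 * C1 / 3" "2 * C2 / 3" "4 * C1 / 3" "4 * C2 / 3" "2 + \<alpha>"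
  proof unfold_locales
    show "(r \<longlongrightarrow> 0) (at (0, 0) within Q)" using r_zero_on_B eps P_on_B by force
  qed (use U slopes C1_pos C2_pos \<alpha> coupling_of_thirds[of C1 C2 "2 + \<alpha>"] in auto)
  obtain I where "I > 0" and "\<forall>p\<in>corner_square U.
      \<bar>du \<phi> p\<bar> \<le> I / r p powr (1 + (2 + \<alpha>)) \<and> \<bar>dv \<phi> p\<bar> \<le> I / r p powr (1 + (2 + \<alpha>))"
    by (rule derivative_bounds)
  moreover have "corner_square U \<subseteq> trapped_region Q r"
    using U(2) square_trapped r_pos by (auto simp: trapped_region_def)
  ultimately show "\<exists>U' V' I0. U' < 0 \<and> V' < 0 \<and> I0 > 0 \<and> (let D0 = {(u, v). U' \<le> u \<and> u \<le> 0 \<and> V' \<le> v \<and> v \<le> 0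
      \<and> (u, v) \<in> Q \<and> r (u, v) > 0} in D0 \<subseteq> trapped_region Q r \<and>
      (\<forall>p\<in>D0. \<bar>du \<phi> p\<bar> \<le> I0 / r p powr (3 + \<alpha>) \<and> \<bar>dv \<phi> p\<bar> \<le> I0 / r p powr (3 + \<alpha>)))"
    using U(1) by (intro exI[of _ U] exI[of _ I]) (simp only: Let_def corner_square_eq[symmetric]; simp)
qed

end
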